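(* Let $R>0$ and let $A\subset\mathbb{R}^d$ be such that $A$ and $\overline{A^c}$ are $R$-supported bodies. If $a_0\in\partial A\cap\partial\overline{A^c}$, then there exist $y_0,y_1\in\mathbb{R}^d$ such that (i) $B(y_0)\subset A^c$ and $B(y_1)\subset(\overline{A^c})^c=\operatorname{int}(A)$; (ii) $B(y_0)\cap B(y_1)=\emptyset$ and $\partial B(y_0)\cap\partial B(y_1)=\{a_0\}$.
   Context: A body is a nonempty closed subset of $\mathbb{R}^d$; $A^c=\mathbb{R}^d\setminus A$, $\overline{X}$ denotes closure; $B(x)=\{y:|y-x|<R\}$; $S^{d-1}$ the unit sphere. For a body $A$ and $a\in\partial A$, $\mathcal{N}_R(A,a)=\{v\in S^{d-1}: A\cap B(a+Rv)=\emptyset\}$; $A$ is $R$-supported if $\mathcal{N}_R(A,a)\ne\emptyset$ for all $a\in\partial A$. *)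

theory Defs
  imports "HOL-Analysis.Analysis"
begin

definition body :: "'a::euclidean_space set \<Rightarrow> bool" where
  "body A \<longleftrightarrow> A \<noteq> {} \<and> closed A"

definition normals_R :: "real \<Rightarrow> 'a::euclidean_space set \<Rightarrow> 'a \<Rightarrow> 'a set" where
  "normals_R R A a = {v. norm v = 1 \<and> A \<inter> ball (a + R *\<^sub>R v) R = {}}"

definition R_supported :: "real \<Rightarrow> 'a::euclidean_space set \<Rightarrow> bool" where
  "R_supported R A \<longleftrightarrow> body A \<and> (\<forall>a\<in>frontier A. normals_R R A a \<noteq> {})"

end

theory Submission
  imports Defs
begin

text \<open>Outer normals of A and of closure (- A) at a0 give two balls of radius R through a0,
one in the complement and one in the interior of A, hence disjoint. Disjointness forces
their centres to be at distance at least 2R, and then by the parallelogram law the only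
point on both spheres is the midpoint of the centres, which is a0.\<close>

lemma parallelogram_law:
  fixes p q :: "'a::real_inner"
  shows "(norm (p + q))\<^sup>2 + (norm (p - q))\<^sup>2 = 2 * (norm p)\<^sup>2 + 2 * (norm q)\<^sup>2"
  by (simp add: power2_norm_eq_inner inner_add inner_diff inner_commute)

lemma dist_ge_if_disjoint_balls:
  fixes x y :: "'a::real_normed_vector"
  assumes "ball x r \<inter> ball y r = {}"
  shows "2 * r \<le> dist x y"
proof (rule ccontr)
  assume "\<not> 2 * r \<le> dist x y"
  then have "midpoint x y \<in> ball x r \<inter> ball y r"
    by (simp add: dist_midpoint)
  with assms show False by blast
qed

lemma common_sphere_point_eq_midpoint:
  fixes x y z :: "'a::real_inner"
  assumes "2 * r \<le> dist x y" "dist x z = r" "dist y z = r"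
  shows "z = midpoint x y"
proof -
  have "(2 * r)\<^sup>2 \<le> (dist x y)\<^sup>2"
    using assms by (intro power_mono) auto
  moreover have "(norm ((x - z) + (y - z)))\<^sup>2 + (dist x y)\<^sup>2 = 2 * r\<^sup>2 + 2 * r\<^sup>2"
    using parallelogram_law[of "x - z" "y - z"] assms(2,3) by (simp add: dist_norm)
  moreover have "(2 * r)\<^sup>2 = 2 * r\<^sup>2 + 2 * r\<^sup>2"
    by (simp add: power2_eq_square)
  ultimately have "(norm ((x - z) + (y - z)))\<^sup>2 \<le> 0"
    by linarith
  then have "x + y = z + z"
    by (simp add: algebra_simps)
  then show ?thesis
    by (metis midpoint_eq_iff)
qed

lemma frontier_disjoint_balls_inter:
  fixes x y a :: "'a::euclidean_space"
  assumes "r > 0" "ball x r \<inter> ball y r = {}" "dist x a = r" "dist y a = r"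
  shows "frontier (ball x r) \<inter> frontier (ball y r) = {a}"
proof -
  have unique: "z = a" if "dist x z = r" "dist y z = r" for z
  proof -
    have "2 * r \<le> dist x y"
      using dist_ge_if_disjoint_balls[OF assms(2)] .
    then show ?thesis
      using common_sphere_point_eq_midpoint that assms(3,4) by metis
  qed
  show ?thesis
    unfolding frontier_ball[OF assms(1)] sphere_def using unique assms(3,4) by blast
qed

lemma R_supported_frontier_ball:
  assumes "R > 0" "R_supported R A" "a \<in> frontier A"
  obtains y where "ball y R \<subseteq> - A" "dist y a = R"
proof -
  obtain v where "norm v = 1" "A \<inter> ball (a + R *\<^sub>R v) R = {}"
    using assms(2,3) unfolding R_supported_def normals_R_def by blast
  with assms(1) show thesis
    by (intro that[of "a + R *\<^sub>R v"]) (auto simp: dist_norm)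
qed

theorem mainTheorem8:
  fixes A :: "'a::euclidean_space set" and R :: real and a0 :: 'a
  assumes "R > 0"
    and "R_supported R A"
    and "R_supported R (closure (- A))"
    and "a0 \<in> frontier A \<inter> frontier (closure (- A))"
  shows "\<exists>y0 y1.
           ball y0 R \<subseteq> - A \<and> ball y1 R \<subseteq> - closure (- A) \<and>
           ball y0 R \<inter> ball y1 R = {} \<and>
           frontier (ball y0 R) \<inter> frontier (ball y1 R) = {a0}"
proof -
  obtain y0 where y0: "ball y0 R \<subseteq> - A" "dist y0 a0 = R"
    using R_supported_frontier_ball assms(1,2,4) by blast
  obtain y1 where y1: "ball y1 R \<subseteq> - closure (- A)" "dist y1 a0 = R"
    using R_supported_frontier_ball assms(1,3,4) by blast
  have disjoint: "ball y0 R \<inter> ball y1 R = {}"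
    using y0(1) y1(1) closure_subset[of "- A"] by blast
  show ?thesis
    using y0 y1 disjoint frontier_disjoint_balls_inter[OF assms(1) disjoint y0(2) y1(2)]
    by blast
qed

end
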